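(* Let $(D,\prec,\succ,d)$ be a commutative differential dendriform algebra of weight zero. Define, for $a,b\in D$, $$a\lhd b:=a\prec d(b)\;(=d(b)\succ a),\qquad a\rhd b:=d(b)\prec a\;(=a\succ d(b)).$$ Then $(D,\lhd,\rhd)$ is a pre-Novikov algebra. Moreover, with $a\circ b:=a\lhd b+a\rhd b=a\prec d(b)+d(b)\prec a$, the pair $(D,\circ)$ is a Novikov algebra.
   Context: $\mathbf{k}$ is a commutative unital ring. A dendriform algebra is a $\mathbf{k}$-module $D$ with bilinear operations $\prec,\succ$ such that for all $a,b,c\in D$: $(a\prec b)\prec c=a\prec(b\prec c+b\succ c)$, $(a\succ b)\prec c=a\succ(b\prec c)$, $(a\prec b+a\succ b)\succ c=a\succ(b\succ c)$. It is commutative if $a\succ b=b\prec a$ for all $a,b$. A derivation of weight $\lambda$ on it is a linear map $d$ with $d(a\prec b)=d(a)\prec b+a\prec d(b)+\lambda d(a)\prec d(b)$ and $d(a\succ b)=d(a)\succ b+a\succ d(b)+\lambda d(a)\succ d(b)$ for all $a,b$; then $(D,\prec,\succ,d)$ is a differential dendriform algebra of weight $\lambda$, called commutative if $(D,\prec,\succ)$ is commutative. A pre-Novikov algebra is a $\mathbf{k}$-module $N$ with bilinear operations $\lhd,\rhd$ such that for all $a,b,c\in N$: $(a\lhd b)\lhd c-a\lhd(b\rhd c+b\lhd c)=(b\rhd a)\lhd c-b\rhd(a\lhd c)$; $(a\rhd b+a\lhd b)\rhd c-a\rhd(b\rhd c)=(b\rhd a+b\lhd a)\rhd c-b\rhd(a\rhd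 c)$; $(a\lhd b)\lhd c=(a\lhd c)\lhd b$; $(a\rhd b+a\lhd b)\rhd c=(a\rhd c)\lhd b$. A (left) Novikov algebra is a $\mathbf{k}$-module $N$ with a bilinear operation $\circ$ such that $(a\circ b)\circ c=(a\circ c)\circ b$ and $(a\circ b)\circ c-a\circ(b\circ c)=(b\circ a)\circ c-b\circ(a\circ c)$ for all $a,b,c$. *)

theory Defs
  imports Main
begin

definition is_module :: "('k::comm_ring_1 \<Rightarrow> 'a::ab_group_add \<Rightarrow> 'a) \<Rightarrow> bool" where
  "is_module sm \<longleftrightarrow>
     (\<forall>r x y. sm r (x + y) = sm r x + sm r y) \<and>
     (\<forall>r s x. sm (r + s) x = sm r x + sm s x) \<and>
     (\<forall>r s x. sm (r * s) x = sm r (sm s x)) \<and>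
     (\<forall>x. sm 1 x = x)"

definition is_linear :: "('k::comm_ring_1 \<Rightarrow> 'a::ab_group_add \<Rightarrow> 'a) \<Rightarrow> ('a \<Rightarrow> 'a) \<Rightarrow> bool" where
  "is_linear sm f \<longleftrightarrow> (\<forall>x y. f (x + y) = f x + f y) \<and> (\<forall>r x. f (sm r x) = sm r (f x))"

definition is_bilinear :: "('k::comm_ring_1 \<Rightarrow> 'a::ab_group_add \<Rightarrow> 'a) \<Rightarrow> ('a \<Rightarrow> 'a \<Rightarrow> 'a) \<Rightarrow> bool" where
  "is_bilinear sm m \<longleftrightarrow> (\<forall>x. is_linear sm (m x)) \<and> (\<forall>y. is_linear sm (\<lambda>x. m x y))"

definition dendriform :: "('k::comm_ring_1 \<Rightarrow> 'a::ab_group_add \<Rightarrow> 'a) \<Rightarrow> ('a \<Rightarrow> 'a \<Rightarrow> 'a) \<Rightarrow> ('a \<Rightarrow> 'a \<Rightarrow> 'a) \<Rightarrow> bool" where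
  "dendriform sm pl pr \<longleftrightarrow> is_module sm \<and> is_bilinear sm pl \<and> is_bilinear sm pr \<and>
     (\<forall>a b c. pl (pl a b) c = pl a (pl b c + pr b c)) \<and>
     (\<forall>a b c. pl (pr a b) c = pr a (pl b c)) \<and>
     (\<forall>a b c. pr (pl a b + pr a b) c = pr a (pr b c))"

definition comm_dendriform :: "('k::comm_ring_1 \<Rightarrow> 'a::ab_group_add \<Rightarrow> 'a) \<Rightarrow> ('a \<Rightarrow> 'a \<Rightarrow> 'a) \<Rightarrow> ('a \<Rightarrow> 'a \<Rightarrow> 'a) \<Rightarrow> bool" where
  "comm_dendriform sm pl pr \<longleftrightarrow> dendriform sm pl pr \<and> (\<forall>a b. pr a b = pl b a)"

definition dend_derivation :: "('k::comm_ring_1 \<Rightarrow> 'a::ab_group_add \<Rightarrow> 'a) \<Rightarrow> ('a \<Rightarrow> 'a \<Rightarrow> 'a) \<Rightarrow> ('a \<Rightarrow> 'a \<Rightarrow> 'a) \<Rightarrow> 'k \<Rightarrow> ('a \<Rightarrow> 'a) \<Rightarrow> bool" where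
  "dend_derivation sm pl pr w d \<longleftrightarrow> is_linear sm d \<and>
     (\<forall>a b. d (pl a b) = pl (d a) b + pl a (d b) + sm w (pl (d a) (d b))) \<and>
     (\<forall>a b. d (pr a b) = pr (d a) b + pr a (d b) + sm w (pr (d a) (d b)))"

definition comm_diff_dendriform :: "('k::comm_ring_1 \<Rightarrow> 'a::ab_group_add \<Rightarrow> 'a) \<Rightarrow> ('a \<Rightarrow> 'a \<Rightarrow> 'a) \<Rightarrow> ('a \<Rightarrow> 'a \<Rightarrow> 'a) \<Rightarrow> 'k \<Rightarrow> ('a \<Rightarrow> 'a) \<Rightarrow> bool" where
  "comm_diff_dendriform sm pl pr w d \<longleftrightarrow> comm_dendriform sm pl pr \<and> dend_derivation sm pl pr w d"

definition pre_novikov :: "('k::comm_ring_1 \<Rightarrow> 'a::ab_group_add \<Rightarrow> 'a) \<Rightarrow> ('a \<Rightarrow> 'a \<Rightarrow> 'a) \<Rightarrow> ('a \<Rightarrow> 'a \<Rightarrow> 'a) \<Rightarrow> bool" where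
  "pre_novikov sm l r \<longleftrightarrow> is_module sm \<and> is_bilinear sm l \<and> is_bilinear sm r \<and>
     (\<forall>a b c. l (l a b) c - l a (r b c + l b c) = l (r b a) c - r b (l a c)) \<and>
     (\<forall>a b c. r (r a b + l a b) c - r a (r b c) = r (r b a + l b a) c - r b (r a c)) \<and>
     (\<forall>a b c. l (l a b) c = l (l a c) b) \<and>
     (\<forall>a b c. r (r a b + l a b) c = l (r a c) b)"

definition novikov :: "('k::comm_ring_1 \<Rightarrow> 'a::ab_group_add \<Rightarrow> 'a) \<Rightarrow> ('a \<Rightarrow> 'a \<Rightarrow> 'a) \<Rightarrow> bool" where
  "novikov sm m \<longleftrightarrow> is_module sm \<and> is_bilinear sm m \<and>
     (\<forall>a b c. m (m a b) c = m (m a c) b) \<and>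
     (\<forall>a b c. m (m a b) c - m a (m b c) = m (m b a) c - m b (m a c))"

end

theory Submission
  imports Defs HOL.Modules
begin

text \<open>A commutative dendriform algebra is the same as a Zinbiel algebra
  \<open>(a \<cdot> b) \<cdot> c = a \<cdot> (b \<cdot> c + c \<cdot> b)\<close> with \<open>a \<cdot> b = a \<prec> b\<close>, and a derivation of weight zero is
  an ordinary Leibniz derivation of it. Each pre-Novikov identity for \<open>a \<lhd> b = a \<cdot> d b\<close> and
  \<open>a \<rhd> b = d b \<cdot> a\<close> then follows by expanding with the Leibniz rule and rebracketing with the
  Zinbiel identity, which turns \<open>(x \<cdot> y) \<cdot> z\<close> into a product whose last factor is symmetric
  in \<open>y, z\<close>. Independently of the origin of the two operations,
  the pre-Novikov identities imply that \<open>\<lhd> + \<rhd>\<close> is Novikov: right commutativity comes from the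
  last two identities, and the associator of \<open>\<lhd> + \<rhd>\<close> is symmetric in its first two arguments
  by the first two.\<close>

locale zinbiel_derivation =
  fixes mult :: "'a::ab_group_add \<Rightarrow> 'a \<Rightarrow> 'a" (infixl \<open>\<cdot>\<close> 70)
    and d :: "'a \<Rightarrow> 'a"
  assumes mult_add_left: "(a + b) \<cdot> c = a \<cdot> c + b \<cdot> c"
    and mult_add_right: "a \<cdot> (b + c) = a \<cdot> b + a \<cdot> c"
    and zinbiel: "(a \<cdot> b) \<cdot> c = a \<cdot> (b \<cdot> c + c \<cdot> b)"
    and d_add: "d (a + b) = d a + d b"
    and leibniz: "d (a \<cdot> b) = d a \<cdot> b + a \<cdot> d b"
begin

lemma additive_mult_left: "additive (\<lambda>a. a \<cdot> b)"
  by unfold_locales (rule mult_add_left)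

lemma additive_mult_right: "additive (\<lambda>b. a \<cdot> b)"
  by unfold_locales (rule mult_add_right)

lemma additive_d: "additive d"
  by unfold_locales (rule d_add)

lemma mult_diff_left: "(a - b) \<cdot> c = a \<cdot> c - b \<cdot> c"
  by (rule additive.diff [OF additive_mult_left])

lemma mult_diff_right: "a \<cdot> (b - c) = a \<cdot> b - a \<cdot> c"
  by (rule additive.diff [OF additive_mult_right])

lemma d_diff: "d (a - b) = d a - d b"
  by (rule additive.diff [OF additive_d])

lemmas expand = zinbiel leibniz mult_add_left mult_add_right d_add
  mult_diff_left mult_diff_right d_diff

lemma pre_novikov_identity1:
  "(a \<cdot> d b) \<cdot> d c - a \<cdot> d (d c \<cdot> b + b \<cdot> d c) = (d a \<cdot> b) \<cdot> d c - d (a \<cdot> d c) \<cdot> b"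
  by (simp add: expand add_ac)

lemma pre_novikov_identity2:
  "d c \<cdot> (d b \<cdot> a + a \<cdot> d b) - d (d c \<cdot> b) \<cdot> a = d c \<cdot> (d a \<cdot> b + b \<cdot> d a) - d (d c \<cdot> a) \<cdot> b"
  by (simp add: expand add_ac)

lemma pre_novikov_identity3: "(a \<cdot> d b) \<cdot> d c = (a \<cdot> d c) \<cdot> d b"
  by (simp add: zinbiel add.commute)

lemma pre_novikov_identity4: "d c \<cdot> (d b \<cdot> a + a \<cdot> d b) = (d c \<cdot> a) \<cdot> d b"
  by (simp add: zinbiel add.commute)

end

lemma module_of_is_module: "is_module sm \<Longrightarrow> module sm"
  unfolding is_module_def by unfold_locales auto

lemma is_bilinear_add:
  assumes "is_module sm" "is_bilinear sm m" "is_bilinear sm n"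
  shows "is_bilinear sm (\<lambda>a b. m a b + n a b)"
  using assms module.scale_right_distrib [OF module_of_is_module [OF assms(1)]]
  unfolding is_bilinear_def is_linear_def by (simp add: add_ac)

lemma is_bilinear_compose_right:
  assumes "is_bilinear sm m" "is_linear sm d"
  shows "is_bilinear sm (\<lambda>a b. m a (d b))" and "is_bilinear sm (\<lambda>a b. m (d b) a)"
  using assms unfolding is_bilinear_def is_linear_def by simp_all

lemma novikov_sum_of_pre_novikov:
  assumes "pre_novikov sm l r"
  shows "novikov sm (\<lambda>a b. l a b + r a b)"
proof -
  have lin: "is_module sm" "is_bilinear sm l" "is_bilinear sm r"
    and pn1: "\<And>a b c. l (l a b) c - l a (r b c + l b c) = l (r b a) c - r b (l a c)"
    and pn2: "\<And>a b c. r (r a b + l a b) c - r a (r b c) = r (r b a + l b a) c - r b (r a c)"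
    and pn3: "\<And>a b c. l (l a b) c = l (l a c) b"
    and pn4: "\<And>a b c. r (r a b + l a b) c = l (r a c) b"
    using assms unfolding pre_novikov_def by blast+
  have add: "\<And>a b c. l (a + b) c = l a c + l b c" "\<And>a b c. r (a + b) c = r a c + r b c"
    "\<And>a b c. l a (b + c) = l a b + l a c" "\<And>a b c. r a (b + c) = r a b + r a c"
    using lin unfolding is_bilinear_def is_linear_def by blast+
  have right_comm: "l (l a b + r a b) c + r (l a b + r a b) c = l (l a c + r a c) b + r (l a c + r a c) b"
    for a b c
    using pn3 [of a b c] pn4 [of a b c] pn4 [of a c b] by (simp add: add add_ac)
  have left_symm:
    "l (l a b + r a b) c + r (l a b + r a b) c - (l a (l b c + r b c) + r a (l b c + r b c))
     = l (l b a + r b a) c + r (l b a + r b a) c - (l b (l a c + r a c) + r b (l a c + r a c))"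
    (is "?lhs = ?rhs") for a b c
  proof -
    have "?lhs = (l (l a b) c - l a (r b c + l b c)) + (l (r a b) c - r a (l b c))
        + (r (r a b + l a b) c - r a (r b c))"
      by (simp add: add algebra_simps)
    also have "\<dots> = (l (r b a) c - r b (l a c)) + (l (r a b) c - r a (l b c))
        + (r (r b a + l b a) c - r b (r a c))"
      by (simp only: pn1 pn2)
    also have "\<dots> = (l (r b a) c - r b (l a c)) + (l (l b a) c - l b (r a c + l a c))
        + (r (r b a + l b a) c - r b (r a c))"
      by (simp only: pn1)
    also have "\<dots> = ?rhs"
      by (simp add: add algebra_simps)
    finally show ?thesis .
  qed
  show ?thesis
    unfolding novikov_def
    using lin is_bilinear_add [OF lin] right_comm left_symm by simp
qed

lemma zinbiel_derivation_of_weight_zero: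
  assumes "comm_diff_dendriform sm pl pr 0 d"
  shows "zinbiel_derivation pl d"
proof -
  have mod: "is_module sm" and bl: "is_bilinear sm pl" and pr: "\<And>a b. pr a b = pl b a"
    and dend: "\<And>a b c. pl (pl a b) c = pl a (pl b c + pr b c)"
    and dl: "is_linear sm d"
    and der: "\<And>a b. d (pl a b) = pl (d a) b + pl a (d b) + sm 0 (pl (d a) (d b))"
    using assms unfolding comm_diff_dendriform_def comm_dendriform_def dendriform_def
      dend_derivation_def by blast+
  show ?thesis
    using bl dl dend der module.scale_zero_left [OF module_of_is_module [OF mod]]
    unfolding is_bilinear_def is_linear_def pr by unfold_locales simp_all
qed

theorem proposition3p15:
  fixes sm :: "'k::comm_ring_1 \<Rightarrow> 'a::ab_group_add \<Rightarrow> 'a"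
    and pl pr :: "'a \<Rightarrow> 'a \<Rightarrow> 'a"
    and d :: "'a \<Rightarrow> 'a"
  assumes "comm_diff_dendriform sm pl pr 0 d"
  shows "pre_novikov sm (\<lambda>a b. pl a (d b)) (\<lambda>a b. pl (d b) a)
         \<and> novikov sm (\<lambda>a b. pl a (d b) + pl (d b) a)"
proof -
  interpret zinbiel_derivation pl d
    using zinbiel_derivation_of_weight_zero [OF assms] .
  have "is_module sm" "is_bilinear sm pl" "is_linear sm d"
    using assms unfolding comm_diff_dendriform_def comm_dendriform_def dendriform_def
      dend_derivation_def by blast+
  then have pre: "pre_novikov sm (\<lambda>a b. pl a (d b)) (\<lambda>a b. pl (d b) a)"
    unfolding pre_novikov_def
    using is_bilinear_compose_right [of sm pl d] pre_novikov_identity1 pre_novikov_identity2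
      pre_novikov_identity3 pre_novikov_identity4 by simp
  then show ?thesis
    using novikov_sum_of_pre_novikov [OF pre] by simp
qed

end
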